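(* Let $(\mathcal{X},d)$ be a finite metric space, $\mu\in\mathcal{M}_+(\mathcal{X})$ with $\mathbb{M}(\mu)>0$, $N\in\mathbb{N}$, and let $\hat\mu_N$ be the multinomial-model estimator. Then for every $p\ge1$, $C>0$, $$\mathbb{E}\big[\mathrm{KR}^p_{p,C}(\hat\mu_N,\mu)\big]\le\Big(\frac{C^p}{2}\sqrt{\mathbb{M}(\mu)}\sum_{x\in\mathcal{X}}\sqrt{\mu(x)}\Big)N^{-1/2}.$$
   Context: $\mathcal{M}_+(\mathcal{X})$ non-negative measures on finite $\mathcal{X}$, $\mathbb{M}(\mu)=\sum_x\mu(x)$. $\mathrm{KR}_{p,C}(\mu,\nu)=\big(\min_{\pi\in\Pi_\le(\mu,\nu)}\sum_{x,x'}d^p(x,x')\pi(x,x')+C^p(\frac{\mathbb{M}(\mu)+\mathbb{M}(\nu)}2-\mathbb{M}(\pi))\big)^{1/p}$ with $\Pi_\le(\mu,\nu)=\{\pi\in\mathcal{M}_+(\mathcal{X}\times\mathcal{X}):\sum_{x'}\pi(x,x')\le\mu(x),\sum_x\pi(x,x')\le\nu(x')\}$. Multinomial model: $X_1,\dots,X_N$ i.i.d. with law $\mu/\mathbb{M}(\mu)$ and $\hat\mu_N=\frac{\mathbb{M}(\mu)}{N}\sum_{x\in\mathcal{X}}|\{k:X_k=x\}|\,\delta_x$. *)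

theory Defs
  imports "HOL-Probability.Probability"
begin

definition is_metric :: "('a \<Rightarrow> 'a \<Rightarrow> real) \<Rightarrow> bool" where
  "is_metric d \<longleftrightarrow> (\<forall>x y. d x y \<ge> 0) \<and> (\<forall>x y. d x y = 0 \<longleftrightarrow> x = y)
      \<and> (\<forall>x y. d x y = d y x) \<and> (\<forall>x y z. d x z \<le> d x y + d y z)"

definition nonneg_measure :: "('a::finite \<Rightarrow> real) \<Rightarrow> bool" where
  "nonneg_measure \<mu> \<longleftrightarrow> (\<forall>x. \<mu> x \<ge> 0)"

definition mass :: "('a::finite \<Rightarrow> real) \<Rightarrow> real" where
  "mass \<mu> = (\<Sum>x\<in>UNIV. \<mu> x)"

definition subcouplings :: "('a::finite \<Rightarrow> real) \<Rightarrow> ('a \<Rightarrow> real) \<Rightarrow> ('a \<times> 'a \<Rightarrow> real) set" where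
  "subcouplings \<mu> \<nu> = {\<pi>. (\<forall>z. \<pi> z \<ge> 0) \<and> (\<forall>x. (\<Sum>x'\<in>UNIV. \<pi> (x, x')) \<le> \<mu> x)
                          \<and> (\<forall>x'. (\<Sum>x\<in>UNIV. \<pi> (x, x')) \<le> \<nu> x')}"

definition KR_cost :: "('a::finite \<Rightarrow> 'a \<Rightarrow> real) \<Rightarrow> real \<Rightarrow> real \<Rightarrow> ('a \<Rightarrow> real) \<Rightarrow> ('a \<Rightarrow> real)
      \<Rightarrow> ('a \<times> 'a \<Rightarrow> real) \<Rightarrow> real" where
  "KR_cost d p C \<mu> \<nu> \<pi> = (\<Sum>(x, x')\<in>UNIV. d x x' powr p * \<pi> (x, x'))
      + C powr p * ((mass \<mu> + mass \<nu>) / 2 - (\<Sum>z\<in>UNIV. \<pi> z))"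

text \<open>Kantorovich-Rubinstein distance KR_{p,C}; the minimum is attained, written as Inf.\<close>
definition KR :: "('a::finite \<Rightarrow> 'a \<Rightarrow> real) \<Rightarrow> real \<Rightarrow> real \<Rightarrow> ('a \<Rightarrow> real) \<Rightarrow> ('a \<Rightarrow> real) \<Rightarrow> real" where
  "KR d p C \<mu> \<nu> = (INF \<pi>\<in>subcouplings \<mu> \<nu>. KR_cost d p C \<mu> \<nu> \<pi>) powr (1 / p)"

definition law_pmf :: "('a::finite \<Rightarrow> real) \<Rightarrow> 'a pmf" where
  "law_pmf \<mu> = embed_pmf (\<lambda>x. \<mu> x / mass \<mu>)"

definition sample_pmf :: "('a::finite \<Rightarrow> real) \<Rightarrow> nat \<Rightarrow> (nat \<Rightarrow> 'a) pmf" where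
  "sample_pmf \<mu> N = Pi_pmf {..<N} undefined (\<lambda>_. law_pmf \<mu>)"

definition emp_est :: "('a::finite \<Rightarrow> real) \<Rightarrow> nat \<Rightarrow> (nat \<Rightarrow> 'a) \<Rightarrow> 'a \<Rightarrow> real" where
  "emp_est \<mu> N X = (\<lambda>x. mass \<mu> / real N * real (card {k\<in>{..<N}. X k = x}))"

end

(* Leaving the common mass min (mu^(x), mu(x)) in place costs nothing, so the
   sub-coupling supported on the diagonal shows that KR^p(mu^, mu) is at most C^p / 2 times
   the l1-distance of mu^ and mu.  Each mu^(x) is M / N times a binomial count, so
   E |mu^(x) - mu(x)| <= sqrt (Var mu^(x)) = sqrt (mu(x) (M - mu(x)) / N) <= sqrt (M mu(x) / N),
   where M is the total mass of mu; summing over x gives the bound. *)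

theory Submission
  imports Defs
begin

lemma sum_UNIV_prod:
  fixes f :: "'a::finite \<times> 'b::finite \<Rightarrow> 'c::comm_monoid_add"
  shows "(\<Sum>z\<in>UNIV. f z) = (\<Sum>x\<in>UNIV. \<Sum>y\<in>UNIV. f (x, y))"
  by (simp add: sum.cartesian_product flip: UNIV_Times_UNIV)

lemma KR_cost_nonneg:
  assumes "\<pi> \<in> subcouplings \<mu> \<nu>"
  shows "0 \<le> KR_cost d p C \<mu> \<nu> \<pi>"
proof -
  have \<pi>_nonneg: "\<And>z. 0 \<le> \<pi> z"
    and rows: "\<And>x. (\<Sum>y\<in>UNIV. \<pi> (x, y)) \<le> \<mu> x"
    and cols: "\<And>y. (\<Sum>x\<in>UNIV. \<pi> (x, y)) \<le> \<nu> y"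
    using assms by (auto simp: subcouplings_def)
  have "(\<Sum>z\<in>UNIV. \<pi> z) \<le> mass \<mu>"
    unfolding sum_UNIV_prod mass_def by (intro sum_mono rows)
  moreover have "(\<Sum>z\<in>UNIV. \<pi> z) \<le> mass \<nu>"
    unfolding sum_UNIV_prod mass_def by (subst sum.swap) (intro sum_mono cols)
  moreover have "0 \<le> (\<Sum>(x, y)\<in>UNIV. d x y powr p * \<pi> (x, y))"
    by (intro sum_nonneg) (auto simp: \<pi>_nonneg)
  ultimately show ?thesis
    unfolding KR_cost_def by (simp add: add_nonneg_nonneg)
qed

lemma KR_powr_le_KR_cost:
  assumes "p \<noteq> 0" and "\<pi> \<in> subcouplings \<mu> \<nu>"
  shows "KR d p C \<mu> \<nu> powr p \<le> KR_cost d p C \<mu> \<nu> \<pi>"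
proof -
  define I where "I = (INF \<pi>\<in>subcouplings \<mu> \<nu>. KR_cost d p C \<mu> \<nu> \<pi>)"
  have "0 \<le> I"
    unfolding I_def using assms(2) by (intro cINF_greatest KR_cost_nonneg) auto
  then have "KR d p C \<mu> \<nu> powr p = I"
    using assms(1) by (simp add: KR_def I_def powr_powr)
  also have "I \<le> KR_cost d p C \<mu> \<nu> \<pi>"
    unfolding I_def using assms(2)
    by (intro cINF_lower bdd_belowI[where m = 0]) (auto intro: KR_cost_nonneg)
  finally show ?thesis .
qed

definition diagonal_subcoupling :: "('a \<Rightarrow> real) \<Rightarrow> ('a \<Rightarrow> real) \<Rightarrow> 'a \<times> 'a \<Rightarrow> real" where
  "diagonal_subcoupling \<mu> \<nu> = (\<lambda>(x, y). if x = y then min (\<mu> x) (\<nu> x) else 0)"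

lemma diagonal_subcoupling_marginal:
  fixes \<mu> \<nu> :: "'a::finite \<Rightarrow> real"
  shows "(\<Sum>y\<in>UNIV. diagonal_subcoupling \<mu> \<nu> (x, y)) = min (\<mu> x) (\<nu> x)"
    and "(\<Sum>y\<in>UNIV. diagonal_subcoupling \<mu> \<nu> (y, x)) = min (\<mu> x) (\<nu> x)"
  by (simp_all add: diagonal_subcoupling_def)

lemma diagonal_subcoupling_in_subcouplings:
  assumes "nonneg_measure \<mu>" and "nonneg_measure \<nu>"
  shows "diagonal_subcoupling \<mu> \<nu> \<in> subcouplings \<mu> \<nu>"
  using assms unfolding subcouplings_def nonneg_measure_def
  by (simp add: diagonal_subcoupling_marginal) (simp add: diagonal_subcoupling_def)

lemma KR_cost_diagonal_subcoupling:
  assumes "\<And>x. d x x = 0"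
  shows "KR_cost d p C \<mu> \<nu> (diagonal_subcoupling \<mu> \<nu>) = C powr p / 2 * (\<Sum>x\<in>UNIV. \<bar>\<mu> x - \<nu> x\<bar>)"
proof -
  have "(\<Sum>(x, y)\<in>UNIV. d x y powr p * diagonal_subcoupling \<mu> \<nu> (x, y)) = 0"
    by (intro sum.neutral) (auto simp: diagonal_subcoupling_def assms)
  moreover have "(mass \<mu> + mass \<nu>) / 2 - (\<Sum>z\<in>UNIV. diagonal_subcoupling \<mu> \<nu> z)
      = (\<Sum>x\<in>UNIV. \<bar>\<mu> x - \<nu> x\<bar>) / 2"
  proof -
    have "(\<Sum>x\<in>UNIV. (\<mu> x + \<nu> x) / 2 - min (\<mu> x) (\<nu> x)) = (\<Sum>x\<in>UNIV. \<bar>\<mu> x - \<nu> x\<bar> / 2)"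
      by (intro sum.cong) (auto simp: min_def)
    then show ?thesis
      by (simp add: sum_UNIV_prod diagonal_subcoupling_marginal mass_def sum_subtractf
          sum.distrib flip: sum_divide_distrib)
  qed
  ultimately show ?thesis
    by (simp add: KR_cost_def)
qed

lemma KR_powr_le_total_variation:
  assumes "\<And>x. d x x = 0" and "nonneg_measure \<mu>" and "nonneg_measure \<nu>" and "p \<noteq> 0"
  shows "KR d p C \<mu> \<nu> powr p \<le> C powr p / 2 * (\<Sum>x\<in>UNIV. \<bar>\<mu> x - \<nu> x\<bar>)"
proof -
  have "KR d p C \<mu> \<nu> powr p \<le> KR_cost d p C \<mu> \<nu> (diagonal_subcoupling \<mu> \<nu>)"
    using assms(2-4) by (intro KR_powr_le_KR_cost diagonal_subcoupling_in_subcouplings)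
  also have "\<dots> = C powr p / 2 * (\<Sum>x\<in>UNIV. \<bar>\<mu> x - \<nu> x\<bar>)"
    using assms(1) by (rule KR_cost_diagonal_subcoupling)
  finally show ?thesis .
qed

lemma (in prob_space) expectation_abs_le_sqrt_second_moment:
  fixes f :: "'a \<Rightarrow> real"
  assumes "integrable M f" and "integrable M (\<lambda>x. (f x)\<^sup>2)"
  shows "expectation (\<lambda>x. \<bar>f x\<bar>) \<le> sqrt (expectation (\<lambda>x. (f x)\<^sup>2))"
proof -
  have "0 \<le> variance (\<lambda>x. \<bar>f x\<bar>)"
    by (rule variance_positive)
  also have "\<dots> = expectation (\<lambda>x. (f x)\<^sup>2) - (expectation (\<lambda>x. \<bar>f x\<bar>))\<^sup>2"
    using assms by (subst variance_eq) auto
  finally show ?thesis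
    by (simp add: real_le_rsqrt)
qed

lemma finite_set_Pi_pmf:
  fixes p :: "'i \<Rightarrow> 'a::finite pmf"
  assumes "finite I"
  shows "finite (set_pmf (Pi_pmf I dflt p))"
  using assms by (subst set_Pi_pmf) auto

lemma expectation_Pi_pmf_component:
  fixes f :: "'a \<Rightarrow> real"
  assumes "finite I" and "i \<in> I"
  shows "measure_pmf.expectation (Pi_pmf I dflt p) (\<lambda>X. f (X i)) = measure_pmf.expectation (p i) f"
proof -
  have "measure_pmf.expectation (Pi_pmf I dflt p) (\<lambda>X. f (X i))
      = measure_pmf.expectation (map_pmf (\<lambda>X. X i) (Pi_pmf I dflt p)) f"
    by simp
  then show ?thesis
    using assms by (simp add: Pi_pmf_component)
qed

lemma expectation_Pi_pmf_mult:
  fixes p :: "'i \<Rightarrow> 'a::finite pmf" and f g :: "'a \<Rightarrow> real"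
  assumes "finite I" and "j \<in> I" and "k \<in> I" and "j \<noteq> k"
  shows "measure_pmf.expectation (Pi_pmf I dflt p) (\<lambda>X. f (X j) * g (X k))
    = measure_pmf.expectation (p j) f * measure_pmf.expectation (p k) g"
proof -
  define h where "h i = (if i = j then f else g)" for i
  have "prob_space.indep_vars (Pi_pmf I dflt p) (\<lambda>_. count_space UNIV) (\<lambda>i X. X i) {j, k}"
    using assms
    by (intro prob_space.indep_vars_subset[OF measure_pmf.prob_space_axioms indep_vars_Pi_pmf]) auto
  then have "prob_space.indep_vars (Pi_pmf I dflt p) (\<lambda>_. borel) (\<lambda>i X. h i (X i)) {j, k}"
    by (rule prob_space.indep_vars_compose2[OF measure_pmf.prob_space_axioms]) simp
  then have "measure_pmf.expectation (Pi_pmf I dflt p) (\<lambda>X. \<Prod>i\<in>{j, k}. h i (X i))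
      = (\<Prod>i\<in>{j, k}. measure_pmf.expectation (Pi_pmf I dflt p) (\<lambda>X. h i (X i)))"
    using assms
    by (intro prob_space.indep_vars_lebesgue_integral[OF measure_pmf.prob_space_axioms])
      (auto intro: integrable_measure_pmf_finite finite_set_Pi_pmf)
  then show ?thesis
    using assms by (simp add: h_def expectation_Pi_pmf_component)
qed

lemma expectation_square_sum_Pi_pmf:
  fixes p :: "'i \<Rightarrow> 'a::finite pmf" and h :: "'a \<Rightarrow> real"
  assumes "finite I" and "\<And>i. i \<in> I \<Longrightarrow> measure_pmf.expectation (p i) h = 0"
  shows "measure_pmf.expectation (Pi_pmf I dflt p) (\<lambda>X. (\<Sum>i\<in>I. h (X i))\<^sup>2)
    = (\<Sum>i\<in>I. measure_pmf.expectation (p i) (\<lambda>v. (h v)\<^sup>2))"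
proof -
  let ?E = "measure_pmf.expectation (Pi_pmf I dflt p)"
  have integrable: "integrable (Pi_pmf I dflt p) f" for f :: "_ \<Rightarrow> real"
    using assms(1) by (intro integrable_measure_pmf_finite finite_set_Pi_pmf)
  have cross: "?E (\<lambda>X. h (X i) * h (X j)) = (if j = i then measure_pmf.expectation (p i) (\<lambda>v. (h v)\<^sup>2) else 0)"
    if "i \<in> I" "j \<in> I" for i j
  proof (cases "j = i")
    case True
    then show ?thesis
      using expectation_Pi_pmf_component[OF assms(1) \<open>i \<in> I\<close>, where f = "\<lambda>v. (h v)\<^sup>2"]
      by (simp add: power2_eq_square)
  next
    case False
    then show ?thesis
      using that assms by (simp add: expectation_Pi_pmf_mult)
  qed
  have "?E (\<lambda>X. (\<Sum>i\<in>I. h (X i))\<^sup>2) = ?E (\<lambda>X. \<Sum>i\<in>I. \<Sum>j\<in>I. h (X i) * h (X j))"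
    by (simp add: power2_eq_square sum_product)
  also have "\<dots> = (\<Sum>i\<in>I. \<Sum>j\<in>I. ?E (\<lambda>X. h (X i) * h (X j)))"
    by (simp add: integrable)
  also have "\<dots> = (\<Sum>i\<in>I. measure_pmf.expectation (p i) (\<lambda>v. (h v)\<^sup>2))"
    using assms(1) by (simp add: cross)
  finally show ?thesis .
qed

lemma pmf_law_pmf:
  assumes "nonneg_measure \<mu>" and "mass \<mu> > 0"
  shows "pmf (law_pmf \<mu>) x = \<mu> x / mass \<mu>"
proof -
  have nonneg: "\<And>x. 0 \<le> \<mu> x / mass \<mu>"
    using assms by (simp add: nonneg_measure_def)
  have "(\<integral>\<^sup>+x. ennreal (\<mu> x / mass \<mu>) \<partial>count_space UNIV) = ennreal (\<Sum>x\<in>UNIV. \<mu> x / mass \<mu>)"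
    using nonneg by (simp add: nn_integral_count_space_finite sum_ennreal)
  also have "(\<Sum>x\<in>UNIV. \<mu> x / mass \<mu>) = 1"
    using assms(2) by (simp add: mass_def flip: sum_divide_distrib)
  finally show ?thesis
    unfolding law_pmf_def using nonneg by (simp add: pmf_embed_pmf)
qed

lemma emp_est_minus_eq_sum:
  assumes "mass \<mu> \<noteq> 0" and "N > 0"
  shows "emp_est \<mu> N X x - \<mu> x = mass \<mu> / N * (\<Sum>k<N. indicator {x} (X k) - \<mu> x / mass \<mu>)"
proof -
  have "real (card {k\<in>{..<N}. X k = x}) = (\<Sum>k<N. indicator {x} (X k))"
    by (simp add: indicator_def sum.If_cases Int_def)
  then show ?thesis
    using assms by (simp add: emp_est_def sum_subtractf) (simp add: field_simps)
qed

lemma expectation_square_emp_est_minus: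
  assumes "nonneg_measure \<mu>" and "mass \<mu> > 0" and "N > 0"
  shows "measure_pmf.expectation (sample_pmf \<mu> N) (\<lambda>X. (emp_est \<mu> N X x - \<mu> x)\<^sup>2)
    = \<mu> x * (mass \<mu> - \<mu> x) / N"
proof -
  define q where "q = \<mu> x / mass \<mu>"
  define h where "h = (\<lambda>v. indicator {x} v - q)"
  have integrable: "integrable (law_pmf \<mu>) f" for f :: "'a \<Rightarrow> real"
    by (simp add: integrable_measure_pmf_finite)
  have law_x: "measure_pmf.prob (law_pmf \<mu>) {x} = q"
    using pmf_law_pmf[OF assms(1,2)] by (simp add: measure_pmf_single q_def)
  have "measure_pmf.expectation (law_pmf \<mu>) h = 0"
    by (simp add: h_def law_x integrable)
  moreover have "measure_pmf.expectation (law_pmf \<mu>) (\<lambda>v. (h v)\<^sup>2) = q - q\<^sup>2"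
  proof -
    have "(\<lambda>v. (h v)\<^sup>2) = (\<lambda>v. (1 - 2 * q) * indicator {x} v + q\<^sup>2)"
      by (auto simp: h_def indicator_def power2_eq_square algebra_simps)
    then show ?thesis
      by (simp add: law_x integrable power2_eq_square algebra_simps)
  qed
  ultimately have sum_h: "measure_pmf.expectation (sample_pmf \<mu> N) (\<lambda>X. (\<Sum>k<N. h (X k))\<^sup>2)
      = N * (q - q\<^sup>2)"
    unfolding sample_pmf_def by (subst expectation_square_sum_Pi_pmf) auto
  have "(emp_est \<mu> N X x - \<mu> x)\<^sup>2 = (mass \<mu> / N)\<^sup>2 * (\<Sum>k<N. h (X k))\<^sup>2" for X
    using assms by (simp add: emp_est_minus_eq_sum h_def q_def flip: power_mult_distrib)
  then have "measure_pmf.expectation (sample_pmf \<mu> N) (\<lambda>X. (emp_est \<mu> N X x - \<mu> x)\<^sup>2)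
      = (mass \<mu> / N)\<^sup>2 * (N * (q - q\<^sup>2))"
    by (simp add: sum_h)
  also have "\<dots> = \<mu> x * (mass \<mu> - \<mu> x) / N"
    using assms by (simp add: q_def power2_eq_square field_simps)
  finally show ?thesis .
qed

lemma expectation_abs_emp_est_minus_le:
  assumes "nonneg_measure \<mu>" and "mass \<mu> > 0" and "N > 0"
  shows "measure_pmf.expectation (sample_pmf \<mu> N) (\<lambda>X. \<bar>emp_est \<mu> N X x - \<mu> x\<bar>)
    \<le> sqrt (mass \<mu> * \<mu> x / N)"
proof -
  have "measure_pmf.expectation (sample_pmf \<mu> N) (\<lambda>X. \<bar>emp_est \<mu> N X x - \<mu> x\<bar>)
      \<le> sqrt (\<mu> x * (mass \<mu> - \<mu> x) / N)"
    unfolding sample_pmf_def expectation_square_emp_est_minus[OF assms, symmetric]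
    by (intro measure_pmf.expectation_abs_le_sqrt_second_moment integrable_measure_pmf_finite
        finite_set_Pi_pmf) auto
  also have "\<dots> \<le> sqrt (mass \<mu> * \<mu> x / N)"
    using assms by (auto simp: nonneg_measure_def field_simps intro!: mult_left_mono)
  finally show ?thesis .
qed

theorem lemmaA1:
  fixes d :: "'a::finite \<Rightarrow> 'a \<Rightarrow> real" and \<mu> :: "'a \<Rightarrow> real"
    and N :: nat and p C :: real
  assumes "is_metric d" and "nonneg_measure \<mu>" and "mass \<mu> > 0"
    and "N \<ge> 1" and "p \<ge> 1" and "C > 0"
  shows "measure_pmf.expectation (sample_pmf \<mu> N) (\<lambda>X. KR d p C (emp_est \<mu> N X) \<mu> powr p)
    \<le> (C powr p / 2 * sqrt (mass \<mu>) * (\<Sum>x\<in>UNIV. sqrt (\<mu> x))) * real N powr (-1/2)"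
proof -
  let ?E = "measure_pmf.expectation (sample_pmf \<mu> N)"
  have N: "N > 0" using assms(4) by simp
  have integrable: "integrable (sample_pmf \<mu> N) f" for f :: "_ \<Rightarrow> real"
    unfolding sample_pmf_def by (intro integrable_measure_pmf_finite finite_set_Pi_pmf) simp
  have "nonneg_measure (emp_est \<mu> N X)" for X
    using assms(3) by (simp add: nonneg_measure_def emp_est_def)
  then have "?E (\<lambda>X. KR d p C (emp_est \<mu> N X) \<mu> powr p)
      \<le> ?E (\<lambda>X. C powr p / 2 * (\<Sum>x\<in>UNIV. \<bar>emp_est \<mu> N X x - \<mu> x\<bar>))"
    using assms(1,2,5)
    by (intro integral_mono integrable KR_powr_le_total_variation) (auto simp: is_metric_def)
  also have "\<dots> = C powr p / 2 * (\<Sum>x\<in>UNIV. ?E (\<lambda>X. \<bar>emp_est \<mu> N X x - \<mu> x\<bar>))"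
    by (simp add: integrable)
  also have "\<dots> \<le> C powr p / 2 * (\<Sum>x\<in>UNIV. sqrt (mass \<mu> * \<mu> x / N))"
    using assms(2,3) N by (intro mult_left_mono sum_mono expectation_abs_emp_est_minus_le) auto
  also have "\<dots> = (C powr p / 2 * sqrt (mass \<mu>) * (\<Sum>x\<in>UNIV. sqrt (\<mu> x))) * real N powr (-1/2)"
  proof -
    have "real N powr (-1/2) = 1 / sqrt N"
      using N by (simp add: powr_minus_divide powr_half_sqrt)
    then have "sqrt (mass \<mu> * \<mu> x / N) = sqrt (mass \<mu>) * sqrt (\<mu> x) * real N powr (-1/2)" for x
      by (simp add: real_sqrt_mult real_sqrt_divide)
    then show ?thesis
      by (simp add: sum_distrib_left sum_distrib_right mult_ac)
  qed
  finally show ?thesis .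
qed

end
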